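(* Let $T$ be a complete continuous logic theory, $\mathcal{H}$ an interpretable Hilbert space in $T$, and $p$ a partial type (type-definable set) in $\mathcal{H}$. If the inner product map is strictly definable on $p\times p$, then in any $M\models T$, $\mathcal{P}(p)$ is a discrete metric space in $H(M)$, and hence $p$ is scattered.
   Context: Work in continuous first-order logic for metric structures. An interpretable Hilbert space in $M\models T$ is a real Hilbert space $H(M)$ which is the direct limit, over a directed partial order, of imaginary sorts $(M_j)$ of $M$ with definable transition maps, such that each map $(x,y)\mapsto\langle h_ix,h_jy\rangle$ on $M_i\times M_j$ is definable ($h_j$ direct-limit maps); this yields an interpretable Hilbert space $\mathcal{H}$ in $T$. Direct-limit maps are taken to be isometric embeddings and pieces identified with subsets of $H(M)$. A type-definable set in $\mathcal{H}$ is a type-definable subset of a single piece. The inner product map is strictly definable on $p\times p$ if it takes only finitely many values there. For $M\models T$, $\mathcal{P}(p)$ is the closure in the weak topology of the set of realisations of $p$ in $H(M)$; $p$ is scattered if for $\omega$-saturated $M\models T$, $\mathcal{P}(p)$ is locally compact in the norm topology. *)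

theory Defs
  imports "HOL-Analysis.Analysis"
begin

definition weak_topology :: "'a::real_inner topology" where
  "weak_topology = topology_generated_by
     {(\<lambda>x. inner x y) -` U | y U. open (U :: real set)}"

text \<open>P(S): the weak closure of a set S of vectors (here S plays the role of the
  set of realisations of the partial type p in H(M)).\<close>
definition weak_closure_P :: "'a::real_inner set \<Rightarrow> 'a set" where
  "weak_closure_P S = weak_topology closure_of S"

definition discrete_metric_subset :: "'a::metric_space set \<Rightarrow> bool" where
  "discrete_metric_subset P \<longleftrightarrow> (\<forall>x\<in>P. \<exists>e>0. \<forall>y\<in>P. dist x y < e \<longrightarrow> y = x)"

end

theory Submission
  imports Defs
begin

text \<open>Inner products with a fixed vector are weakly continuous, so every closed condition on the
  values inner x y that holds on S survives the passage to the weak closure P(S); by symmetry of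
  the inner product this can be done in both arguments. Hence all inner products within P(S) lie
  in the closure of the inner products within S, which is a finite set. As
  dist x y = sqrt (inner x x - 2 inner x y + inner y y), only finitely many distances occur in
  P(S), so the least positive one separates the points and P(S) carries the discrete topology.\<close>

lemma topspace_weak_topology [simp]: "topspace weak_topology = UNIV"
  unfolding weak_topology_def by (auto intro!: exI[of _ 0] exI[of _ UNIV])

lemma continuous_map_weak_topology_inner:
  "continuous_map weak_topology euclideanreal (\<lambda>x::'a::real_inner. inner x y)"
  unfolding continuous_map_def
proof (intro conjI allI impI)
  fix U :: "real set"
  assume "openin euclideanreal U"
  then have "openin (weak_topology :: 'a topology) ((\<lambda>x. inner x y) -` U)"
    unfolding weak_topology_def by (intro topology_generated_by_Basis) auto
  then show "openin weak_topology {x \<in> topspace weak_topology. inner x y \<in> U}"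
    by (simp add: vimage_def)
qed auto

lemma inner_weak_closure_mem:
  assumes "closed C" and "\<And>x. x \<in> S \<Longrightarrow> inner x y \<in> C" and "x \<in> weak_closure_P S"
  shows "inner (x::'a::real_inner) y \<in> C"
proof -
  have "(\<lambda>x. inner x y) ` weak_closure_P S \<subseteq> euclideanreal closure_of ((\<lambda>x. inner x y) ` S)"
    unfolding weak_closure_P_def
    by (rule continuous_map_image_closure_subset[OF continuous_map_weak_topology_inner])
  also have "\<dots> \<subseteq> C"
    using assms(1,2) by (simp add: closure_minimal image_subset_iff)
  finally show ?thesis
    using assms(3) by blast
qed

lemma inner_weak_closure_mem_closure:
  assumes x: "x \<in> weak_closure_P S" and y: "y \<in> weak_closure_P S"
  shows "inner (x::'a::real_inner) y \<in> closure {inner u v | u v. u \<in> S \<and> v \<in> S}"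
    (is "_ \<in> ?C")
proof -
  have in_S: "inner u v \<in> ?C" if "u \<in> S" "v \<in> S" for u v
    by (rule closure_subset[THEN subsetD]) (use that in blast)
  have left: "inner v u \<in> ?C" if "u \<in> S" "v \<in> weak_closure_P S" for u v
    using closed_closure in_S[OF _ that(1)] that(2) by (rule inner_weak_closure_mem)
  have "inner u x \<in> ?C" if "u \<in> S" for u
    by (subst inner_commute) (rule left[OF that x])
  then have "inner y x \<in> ?C"
    using y closed_closure by (rule inner_weak_closure_mem[rotated])
  then show ?thesis
    by (subst inner_commute)
qed

lemma finite_dists_if_finite_inners:
  fixes A :: "'a::real_inner set"
  assumes "finite {inner x y | x y. x \<in> A \<and> y \<in> A}" (is "finite ?V")
  shows "finite {dist x y | x y. x \<in> A \<and> y \<in> A}"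
proof (rule finite_subset)
  show "finite ((\<lambda>(a, b, c). sqrt (a - 2 * b + c)) ` (?V \<times> ?V \<times> ?V))"
    using assms by simp
  show "{dist x y | x y. x \<in> A \<and> y \<in> A}
      \<subseteq> (\<lambda>(a, b, c). sqrt (a - 2 * b + c)) ` (?V \<times> ?V \<times> ?V)"
  proof clarify
    fix x y
    assume "x \<in> A" "y \<in> A"
    then have mem: "(inner x x, inner x y, inner y y) \<in> ?V \<times> ?V \<times> ?V"
      by blast
    have dist: "dist x y = sqrt (inner x x - 2 * inner x y + inner y y)"
      by (simp add: dist_norm norm_eq_sqrt_inner inner_diff_left inner_diff_right inner_commute)
    show "dist x y \<in> (\<lambda>(a, b, c). sqrt (a - 2 * b + c)) ` (?V \<times> ?V \<times> ?V)"
      using mem by (rule rev_image_eqI) (simp add: dist)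
  qed
qed

lemma discrete_metric_subset_if_finite_dists:
  assumes fin: "finite {dist x y | x y. x \<in> A \<and> y \<in> A}" (is "finite ?D")
  shows "discrete_metric_subset A"
  unfolding discrete_metric_subset_def
proof (intro ballI exI conjI impI)
  let ?e = "Min (insert 1 {d \<in> ?D. d > 0})"
  show "?e > 0"
    using fin by (subst Min_gr_iff) auto
  fix x y
  assume "x \<in> A" "y \<in> A" "dist x y < ?e"
  moreover have "?e \<le> dist x y" if "dist x y > 0"
    using fin that \<open>x \<in> A\<close> \<open>y \<in> A\<close> by (intro Min_le) auto
  ultimately show "y = x"
    by (cases "dist x y > 0") auto
qed

lemma subtopology_eq_discrete_topology_if_discrete_metric_subset:
  assumes "discrete_metric_subset A"
  shows "subtopology euclidean A = discrete_topology A"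
proof (subst eq_commute, subst discrete_topology_unique, intro conjI ballI)
  fix x
  assume x: "x \<in> A"
  with assms obtain e where "e > 0" and "\<forall>y\<in>A. dist x y < e \<longrightarrow> y = x"
    unfolding discrete_metric_subset_def by blast
  then have "{x} = A \<inter> ball x e"
    using x by auto
  then show "openin (subtopology euclidean A) {x}"
    by (metis open_ball openin_open)
qed simp

theorem lemma2p7:
  fixes S :: "'a::{real_inner, complete_space} set"
  assumes strictly_definable: "finite {inner x y | x y. x \<in> S \<and> y \<in> S}"
  shows "discrete_metric_subset (weak_closure_P S)
         \<and> locally_compact_space (subtopology euclidean (weak_closure_P S))"
proof -
  let ?P = "weak_closure_P S"
  have "closure {inner x y | x y. x \<in> S \<and> y \<in> S} = {inner x y | x y. x \<in> S \<and> y \<in> S}"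
    using strictly_definable by (simp add: finite_imp_closed)
  then have "{inner x y | x y. x \<in> ?P \<and> y \<in> ?P} \<subseteq> {inner x y | x y. x \<in> S \<and> y \<in> S}"
    using inner_weak_closure_mem_closure by blast
  then have "finite {inner x y | x y. x \<in> ?P \<and> y \<in> ?P}"
    using strictly_definable by (rule finite_subset)
  then have "discrete_metric_subset ?P"
    by (intro discrete_metric_subset_if_finite_dists finite_dists_if_finite_inners)
  then show ?thesis
    by (simp add: subtopology_eq_discrete_topology_if_discrete_metric_subset
        locally_compact_space_discrete_topology)
qed

end
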